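(* For every countably infinite subset $C\subseteq(0,\infty)$ there exists a countable directed graph $E$ such that $$\{\beta_v : v\in\textstyle\bigcup_{\beta>0}E^0_{\beta\text{-reg}}\}=C.$$
   Context: For a countable directed graph $E$ and $v\in E^0$, $E^nv$ is the set of paths of length $n$ ending at $v$, $Z_v(\beta)=\sum_{n\ge0}|E^nv|e^{-\beta n}\in[0,\infty]$, $E^0_{\beta\text{-reg}}=\{v\in E^0:Z_v(\beta)<\infty\}$, and $\beta_v=\inf\{\beta\in\mathbb R:Z_v(\beta)<\infty\}$ (the critical inverse temperature of $v$). *)

theory Defs
  imports "HOL-Analysis.Analysis" "HOL-Library.Extended_Nonnegative_Real" "HOL-Library.Extended_Real"
begin

definition cdigraph :: "'v set \<Rightarrow> 'e set \<Rightarrow> ('e \<Rightarrow> 'v) \<Rightarrow> ('e \<Rightarrow> 'v) \<Rightarrow> bool" where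
  "cdigraph V Ed s r \<longleftrightarrow> countable V \<and> countable Ed \<and> (\<forall>e\<in>Ed. s e \<in> V \<and> r e \<in> V)"

text \<open>E^n v: paths e_1 ... e_n of length n (r e_i = s e_(i+1)) ending at v (r e_n = v);
  for n = 0 the only path is the vertex v itself (represented by the empty list).\<close>
definition paths_to :: "'e set \<Rightarrow> ('e \<Rightarrow> 'v) \<Rightarrow> ('e \<Rightarrow> 'v) \<Rightarrow> nat \<Rightarrow> 'v \<Rightarrow> 'e list set" where
  "paths_to Ed s r n v = {p. length p = n \<and> set p \<subseteq> Ed \<and>
      (\<forall>i. Suc i < n \<longrightarrow> r (p ! i) = s (p ! Suc i)) \<and> (n > 0 \<longrightarrow> r (last p) = v)}"

definition ecard :: "'a set \<Rightarrow> ennreal" where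
  "ecard A = (if finite A then of_nat (card A) else \<infinity>)"

definition Zfun :: "'e set \<Rightarrow> ('e \<Rightarrow> 'v) \<Rightarrow> ('e \<Rightarrow> 'v) \<Rightarrow> 'v \<Rightarrow> real \<Rightarrow> ennreal" where
  "Zfun Ed s r v \<beta> = (\<Sum>n. ecard (paths_to Ed s r n v) * ennreal (exp (- \<beta> * real n)))"

definition beta_reg :: "'v set \<Rightarrow> 'e set \<Rightarrow> ('e \<Rightarrow> 'v) \<Rightarrow> ('e \<Rightarrow> 'v) \<Rightarrow> real \<Rightarrow> 'v set" where
  "beta_reg V Ed s r \<beta> = {v\<in>V. Zfun Ed s r v \<beta> < \<infinity>}"

text \<open>Critical inverse temperature, as an extended real (inf of the empty set is +\<infinity>,
  an unbounded-below set gives -\<infinity>).\<close>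
definition crit_beta :: "'e set \<Rightarrow> ('e \<Rightarrow> 'v) \<Rightarrow> ('e \<Rightarrow> 'v) \<Rightarrow> 'v \<Rightarrow> ereal" where
  "crit_beta Ed s r v = Inf (ereal ` {\<beta>. Zfun Ed s r v \<beta> < \<infinity>})"

end

theory Submission
  imports Defs
begin

text \<open>For c > 0 take a one-sided infinite chain of vertices (0 \<leftarrow> 1 \<leftarrow> 2 \<leftarrow> \<dots>) with
  m_k parallel edges from k + 1 to k, where the integers m_k are chosen so that the
  partial products m_0 \<cdots> m_(n-1) stay within a bounded factor of e^(cn). The number of
  paths of length n ending at any vertex of the chain is then comparable to e^(cn), so
  Z_v(\<beta>) < \<infinity> exactly when \<beta> > c: every vertex is \<beta>-regular for some \<beta> > 0
  and has critical inverse temperature c. The disjoint union of such chains, one for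
  each element of an enumeration of C, realises C.\<close>

lemma paths_to_0 [simp]: "paths_to Ed s r 0 v = {[]}"
  by (auto simp: paths_to_def)

lemma snoc_in_paths_to_Suc_iff:
  "q @ [e] \<in> paths_to Ed s r (Suc n) v \<longleftrightarrow>
     e \<in> Ed \<and> r e = v \<and> q \<in> paths_to Ed s r n (s e)"
proof (cases "n = 0")
  case True
  then show ?thesis by (auto simp: paths_to_def)
next
  case False
  then have "last q = q ! (n - 1)" if "length q = n"
    using that by (auto simp: last_conv_nth)
  then show ?thesis
    unfolding paths_to_def by (auto simp: nth_append less_Suc_eq) (metis diff_Suc_1 One_nat_def)
qed

lemma paths_to_Suc:
  "paths_to Ed s r (Suc n) v =
     (\<lambda>(e, q). q @ [e]) ` (SIGMA e:{e\<in>Ed. r e = v}. paths_to Ed s r n (s e))"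
proof (intro set_eqI iffI)
  fix p assume p: "p \<in> paths_to Ed s r (Suc n) v"
  then have "p \<noteq> []" by (auto simp: paths_to_def)
  then obtain q e where "p = q @ [e]" by (metis rev_exhaust)
  with p show "p \<in> (\<lambda>(e, q). q @ [e]) ` (SIGMA e:{e\<in>Ed. r e = v}. paths_to Ed s r n (s e))"
    by (force simp: snoc_in_paths_to_Suc_iff)
qed (auto simp: snoc_in_paths_to_Suc_iff)

text \<open>Vertex k of chain i is coded as prod_encode (i, k); the j-th edge from vertex
  k + 1 to vertex k of chain i is coded as prod_encode (i, prod_encode (k, j)).\<close>

definition chain_src :: "nat \<Rightarrow> nat" where
  "chain_src e = (case prod_decode e of (i, kj) \<Rightarrow> prod_encode (i, Suc (fst (prod_decode kj))))"

definition chain_rng :: "nat \<Rightarrow> nat" where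
  "chain_rng e = (case prod_decode e of (i, kj) \<Rightarrow> prod_encode (i, fst (prod_decode kj)))"

definition chain_edges :: "(nat \<Rightarrow> nat \<Rightarrow> nat) \<Rightarrow> nat set" where
  "chain_edges m = {prod_encode (i, prod_encode (k, j)) | i k j. j < m i k}"

lemma chain_edges_into:
  "{e \<in> chain_edges m. chain_rng e = prod_encode (i, k)} =
     (\<lambda>j. prod_encode (i, prod_encode (k, j))) ` {..<m i k}"
  by (auto simp: chain_edges_def chain_rng_def prod_encode_eq)

lemma chain_src_of_edge_into:
  "e \<in> {e \<in> chain_edges m. chain_rng e = prod_encode (i, k)} \<Longrightarrow>
     chain_src e = prod_encode (i, Suc k)"
  by (auto simp: chain_edges_into chain_src_def)

lemma card_paths_to_chain:
  "finite (paths_to (chain_edges m) chain_src chain_rng n (prod_encode (i, k))) \<and>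
   card (paths_to (chain_edges m) chain_src chain_rng n (prod_encode (i, k))) =
     (\<Prod>l<n. m i (k + l))"
proof (induction n arbitrary: k)
  case 0
  then show ?case by simp
next
  case (Suc n)
  let ?A = "{e \<in> chain_edges m. chain_rng e = prod_encode (i, k)}"
  let ?Q = "paths_to (chain_edges m) chain_src chain_rng n (prod_encode (i, Suc k))"
  have "(SIGMA e:?A. paths_to (chain_edges m) chain_src chain_rng n (chain_src e)) = ?A \<times> ?Q"
    using chain_src_of_edge_into by auto
  then have paths: "paths_to (chain_edges m) chain_src chain_rng (Suc n) (prod_encode (i, k)) =
      (\<lambda>(e, q). q @ [e]) ` (?A \<times> ?Q)"
    by (simp only: paths_to_Suc)
  have "inj_on (\<lambda>(e, q). q @ [e]) (?A \<times> ?Q)"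
    by (rule inj_onI) auto
  moreover have "finite ?A" "card ?A = m i k"
    unfolding chain_edges_into by (auto simp: card_image inj_on_def prod_encode_eq)
  moreover have "finite ?Q" "card ?Q = (\<Prod>l<n. m i (Suc k + l))"
    using Suc.IH[of "Suc k"] by auto
  ultimately show ?case
    unfolding paths
    by (simp add: card_image card_cartesian_product prod.lessThan_Suc_shift del: prod.lessThan_Suc)
qed

lemma suminf_exp_weighted_less_top_iff:
  fixes a :: "nat \<Rightarrow> nat"
  assumes "L > 0"
    and lower: "\<And>n. L * exp (c * real n) \<le> real (a n)"
    and upper: "\<And>n. real (a n) \<le> U * exp (c * real n)"
  shows "(\<Sum>n. of_nat (a n) * ennreal (exp (- \<beta> * real n))) < \<infinity> \<longleftrightarrow> c < \<beta>"
proof -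
  define f where "f n = real (a n) * exp (- \<beta> * real n)" for n
  have f_nonneg: "0 \<le> f n" for n
    unfolding f_def by simp
  have exp_eq: "exp (c * real n) * exp (- \<beta> * real n) = exp (c - \<beta>) ^ n" for n
  proof -
    have "exp (c * real n) * exp (- \<beta> * real n) = exp (real n * (c - \<beta>))"
      by (simp add: exp_add[symmetric] algebra_simps)
    then show ?thesis
      by (simp only: exp_of_nat_mult)
  qed
  have "(\<Sum>n. of_nat (a n) * ennreal (exp (- \<beta> * real n))) = (\<Sum>n. ennreal (f n))"
    unfolding f_def by (simp add: ennreal_of_nat_eq_real_of_nat ennreal_mult'')
  then have "(\<Sum>n. of_nat (a n) * ennreal (exp (- \<beta> * real n))) < \<infinity> \<longleftrightarrow> summable f"
    using summable_suminf_not_top[OF f_nonneg] ennreal_suminf_neq_top[OF _ f_nonneg]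
    by (auto simp: top.not_eq_extremum)
  also have "summable f \<longleftrightarrow> c < \<beta>"
  proof
    assume "summable f"
    then have "f \<longlonglongrightarrow> 0"
      by (rule summable_LIMSEQ_zero)
    then have "eventually (\<lambda>n. f n < L) sequentially"
      using \<open>L > 0\<close> by (rule order_tendstoD(2))
    then obtain n where "f n < L"
      by (meson eventually_sequentially order.refl)
    moreover have "L * exp (c - \<beta>) ^ n \<le> f n"
      unfolding f_def exp_eq[symmetric] mult.assoc[symmetric]
      using lower[of n] by (intro mult_right_mono) simp_all
    ultimately have "L * exp (real n * (c - \<beta>)) < L * 1"
      by (simp add: exp_of_nat_mult)
    then have "real n * (c - \<beta>) < 0"
      using \<open>L > 0\<close> by (simp only: mult_less_cancel_left_pos exp_less_one_iff)
    then show "c < \<beta>"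
      by (simp add: mult_less_0_iff)
  next
    assume "c < \<beta>"
    then have "summable (\<lambda>n. U * exp (c - \<beta>) ^ n)"
      by (intro summable_mult summable_geometric) simp
    moreover have "f n \<le> U * exp (c - \<beta>) ^ n" for n
      unfolding f_def exp_eq[symmetric] mult.assoc[symmetric]
      using upper[of n] by (intro mult_right_mono) simp_all
    ultimately show "summable f"
      using f_nonneg by (metis summable_comparison_test' real_norm_def abs_of_nonneg)
  qed
  finally show ?thesis .
qed

text \<open>exp_approx c n is the least multiple of exp_approx c (n - 1) that is at least
  e^(cn); the overshoot is less than exp_approx c (n - 1), which keeps the ratio to e^(cn) below
  the geometric sum 1 / (1 - e^(-c)).\<close>

fun exp_approx :: "real \<Rightarrow> nat \<Rightarrow> nat" where
  "exp_approx c 0 = 1"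
| "exp_approx c (Suc n) =
     nat \<lceil>exp (c * real (Suc n)) / real (exp_approx c n)\<rceil> * exp_approx c n"

definition exp_approx_factor :: "real \<Rightarrow> nat \<Rightarrow> nat" where
  "exp_approx_factor c n = nat \<lceil>exp (c * real (Suc n)) / real (exp_approx c n)\<rceil>"

lemma exp_approx_Suc: "exp_approx c (Suc n) = exp_approx_factor c n * exp_approx c n"
  by (simp add: exp_approx_factor_def)

declare exp_approx.simps(2) [simp del]

lemma exp_approx_add:
  "exp_approx c (k + n) = exp_approx c k * (\<Prod>l<n. exp_approx_factor c (k + l))"
  by (induction n) (simp_all add: exp_approx_Suc)

lemma exp_approx_bounds:
  assumes "c > 0"
  shows "exp (c * real n) \<le> real (exp_approx c n) \<and>
         real (exp_approx c n) \<le> exp (c * real n) / (1 - exp (- c))"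
proof (induction n)
  case 0
  have "1 - exp (- c) \<le> 1" "0 < 1 - exp (- c)"
    using \<open>c > 0\<close> by simp_all
  then show ?case
    by (simp add: field_simps)
next
  case (Suc n)
  define x where "x = exp (c * real (Suc n))"
  define p where "p = real (exp_approx c n)"
  have "p > 0"
    using Suc unfolding p_def by (meson exp_gt_zero less_le_trans)
  have "x > 0"
    unfolding x_def by simp
  have approx_eq: "real (exp_approx c (Suc n)) = of_int \<lceil>x / p\<rceil> * p"
    using \<open>x > 0\<close> \<open>p > 0\<close> by (simp add: exp_approx.simps(2) x_def p_def)
  have "x \<le> of_int \<lceil>x / p\<rceil> * p"
    using \<open>p > 0\<close> by (metis le_of_int_ceiling pos_divide_le_eq)
  moreover have "of_int \<lceil>x / p\<rceil> * p \<le> x / (1 - exp (- c))"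
  proof -
    have "x * exp (- c) = exp (c * real n)"
      unfolding x_def by (simp add: exp_add[symmetric] algebra_simps)
    then have "p \<le> x * exp (- c) / (1 - exp (- c))"
      using Suc p_def by simp
    moreover have "of_int \<lceil>x / p\<rceil> * p \<le> (x / p + 1) * p"
      using \<open>p > 0\<close> ceiling_correct[of "x / p"] by (intro mult_right_mono) simp_all
    moreover have "(x / p + 1) * p = x + p"
      using \<open>p > 0\<close> by (simp add: field_simps)
    moreover have "x + x * exp (- c) / (1 - exp (- c)) = x / (1 - exp (- c))"
      using \<open>c > 0\<close> by (simp add: field_simps)
    ultimately show ?thesis
      by linarith
  qed
  ultimately show ?case
    by (simp add: approx_eq x_def)
qed

lemma exp_approx_factor_prod_bounds:
  assumes "c > 0"
  defines "\<delta> \<equiv> 1 - exp (- c)"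
  shows "\<delta> * exp (c * real n) \<le> real (\<Prod>l<n. exp_approx_factor c (k + l)) \<and>
         real (\<Prod>l<n. exp_approx_factor c (k + l)) \<le> exp (c * real n) / \<delta>"
proof -
  define q where "q = real (\<Prod>l<n. exp_approx_factor c (k + l))"
  have "\<delta> > 0"
    using \<open>c > 0\<close> unfolding \<delta>_def by simp
  note bounds_k = exp_approx_bounds[OF \<open>c > 0\<close>, of k, folded \<delta>_def]
  note bounds_kn = exp_approx_bounds[OF \<open>c > 0\<close>, of "k + n", folded \<delta>_def]
  have approx_kn: "real (exp_approx c (k + n)) = real (exp_approx c k) * q"
    unfolding q_def exp_approx_add by simp
  have exp_kn: "exp (c * real (k + n)) = exp (c * real k) * exp (c * real n)"
    by (simp add: exp_add[symmetric] algebra_simps)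
  have "real (exp_approx c k) > 0"
    using bounds_k by (meson exp_gt_zero less_le_trans)
  moreover have "real (exp_approx c k) * (\<delta> * exp (c * real n)) \<le> real (exp_approx c k) * q"
  proof -
    have "real (exp_approx c k) * (\<delta> * exp (c * real n))
        \<le> exp (c * real k) / \<delta> * (\<delta> * exp (c * real n))"
      using bounds_k \<open>\<delta> > 0\<close> by (intro mult_right_mono) simp_all
    also have "\<dots> = exp (c * real (k + n))"
      using \<open>\<delta> > 0\<close> exp_kn by simp
    finally show ?thesis
      using bounds_kn approx_kn by simp
  qed
  moreover have "real (exp_approx c k) * q \<le> real (exp_approx c k) * (exp (c * real n) / \<delta>)"
  proof -
    have "real (exp_approx c k) * q \<le> exp (c * real k) * (exp (c * real n) / \<delta>)"
      using bounds_kn approx_kn exp_kn by simp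
    also have "\<dots> \<le> real (exp_approx c k) * (exp (c * real n) / \<delta>)"
      using bounds_k \<open>\<delta> > 0\<close> by (intro mult_right_mono) simp_all
    finally show ?thesis .
  qed
  ultimately show ?thesis
    unfolding q_def by (simp only: mult_le_cancel_left_pos)
qed

lemma ecard_paths_to_chain:
  "ecard (paths_to (chain_edges m) chain_src chain_rng n (prod_encode (i, k))) =
     of_nat (\<Prod>l<n. m i (k + l))"
  using card_paths_to_chain by (simp add: ecard_def)

definition exp_chain_edges :: "(nat \<Rightarrow> real) \<Rightarrow> nat set" where
  "exp_chain_edges c = chain_edges (\<lambda>i. exp_approx_factor (c i))"

lemma Zfun_exp_chain_less_top_iff:
  assumes "\<And>i. c i > 0"
  shows "Zfun (exp_chain_edges c) chain_src chain_rng v \<beta> < \<infinity> \<longleftrightarrow> c (fst (prod_decode v)) < \<beta>"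
proof -
  obtain i k where v: "v = prod_encode (i, k)"
    by (metis prod_decode_inverse prod.exhaust)
  have "1 - exp (- c i) > 0"
    using assms[of i] by simp
  then have "Zfun (exp_chain_edges c) chain_src chain_rng v \<beta> < \<infinity> \<longleftrightarrow> c i < \<beta>"
    unfolding Zfun_def exp_chain_edges_def v ecard_paths_to_chain
    by (rule suminf_exp_weighted_less_top_iff[where U = "1 / (1 - exp (- c i))"])
      (use exp_approx_factor_prod_bounds[OF assms] in simp_all)
  then show ?thesis
    by (simp add: v)
qed

lemma crit_beta_eqI:
  assumes "\<And>\<beta>. Zfun Ed s r v \<beta> < \<infinity> \<longleftrightarrow> c < \<beta>"
  shows "crit_beta Ed s r v = ereal c"
proof -
  have "{\<beta>. Zfun Ed s r v \<beta> < \<infinity>} = {c<..}"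
    using assms by auto
  moreover have "Inf (ereal ` {c<..}) = ereal c"
    using ereal_Inf'[OF bdd_below_Ioi, of c] gt_ex[of c] by (auto simp: cInf_greaterThan)
  ultimately show ?thesis
    unfolding crit_beta_def by simp
qed

lemma exp_chain_all_regular:
  assumes "\<And>i. c i > 0"
  shows "(\<Union>\<beta>\<in>{0<..}. beta_reg UNIV (exp_chain_edges c) chain_src chain_rng \<beta>) = UNIV"
proof (rule sym, intro UNIV_eq_I UN_I)
  fix v
  show "c (fst (prod_decode v)) + 1 \<in> {0<..}"
    using assms[of "fst (prod_decode v)"] by simp
  show "v \<in> beta_reg UNIV (exp_chain_edges c) chain_src chain_rng (c (fst (prod_decode v)) + 1)"
    unfolding beta_reg_def using Zfun_exp_chain_less_top_iff[OF assms] by simp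
qed

lemma range_crit_beta_exp_chain:
  assumes "\<And>i. c i > 0"
  shows "range (crit_beta (exp_chain_edges c) chain_src chain_rng) = ereal ` range c"
proof -
  have crit: "crit_beta (exp_chain_edges c) chain_src chain_rng v = ereal (c (fst (prod_decode v)))"
    for v
    by (intro crit_beta_eqI Zfun_exp_chain_less_top_iff assms)
  show ?thesis
    unfolding crit
  proof (intro equalityI subsetI)
    fix x
    assume "x \<in> ereal ` range c"
    then obtain i where "x = ereal (c i)"
      by auto
    then show "x \<in> range (\<lambda>v. ereal (c (fst (prod_decode v))))"
      by (intro image_eqI[where x = "prod_encode (i, 0)"]) simp_all
  qed auto
qed

theorem proposition6p12:
  fixes C :: "real set"
  assumes "countable C" and "infinite C" and "C \<subseteq> {0<..}"
  shows "\<exists>(V::nat set) (Ed::nat set) (s::nat \<Rightarrow> nat) (r::nat \<Rightarrow> nat).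
           cdigraph V Ed s r \<and>
           crit_beta Ed s r ` (\<Union>\<beta>\<in>{0<..}. beta_reg V Ed s r \<beta>) = ereal ` C"
proof -
  define c where "c = from_nat_into C"
  have "C \<noteq> {}"
    using \<open>infinite C\<close> by auto
  then have range_c: "range c = C"
    unfolding c_def using \<open>countable C\<close> by (rule range_from_nat_into)
  then have c_pos: "c i > 0" for i
    using \<open>C \<subseteq> {0<..}\<close> by auto
  show ?thesis
  proof (intro exI conjI)
    show "cdigraph UNIV (exp_chain_edges c) chain_src chain_rng"
      unfolding cdigraph_def by (simp add: countableI_type)
    show "crit_beta (exp_chain_edges c) chain_src chain_rng `
        (\<Union>\<beta>\<in>{0<..}. beta_reg UNIV (exp_chain_edges c) chain_src chain_rng \<beta>) = ereal ` C"
      unfolding exp_chain_all_regular[OF c_pos] range_crit_beta_exp_chain[OF c_pos] range_c ..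
  qed
qed

end
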